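(* Let $\mu\in(0,1)$ and let $\beta:[0,\infty)\to(0,\infty)$ be positive, bounded, non-increasing with $\lim_{a\to\infty}a\beta(a)=\mu$, and suppose $\beta(a)=\frac{\mu}{1+a}+g(a)$ where $g\in L^1(0,\infty)$ and there exist $K_0,\alpha>0$ with $\int_a^\infty|g(s)|ds\le K_0(1+a)^{-\alpha}$ for all $a\ge0$. Let $B(a)=\int_0^a\beta$, $W(\tau,b)=C(\tau)e^{-B(e^{\tau}b)}(1-b)^{\mu-1}$ on $[0,1)$ with $C(\tau)>0$ such that $\int_0^1W(\tau,b)db=1$, and $W_\infty(b)=\frac{b^{-\mu}(1-b)^{\mu-1}}{\int_0^1b'^{-\mu}(1-b')^{\mu-1}db'}$. Then for all $\tau\ge0$, $$\|W(\tau,\cdot)-W_\infty\|_{L^1(0,1)}\le2\int_\tau^\infty\int_0^1\left|e^{\tau'}b\beta(e^{\tau'}b)-\mu\right|W(\tau',b)\,db\,d\tau'.$$ *)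

theory Defs
  imports "HOL-Analysis.Analysis"
begin

definition Bfun :: "(real \<Rightarrow> real) \<Rightarrow> real \<Rightarrow> real" where
  "Bfun \<beta> a = integral {0..a} \<beta>"

definition Wfun :: "real \<Rightarrow> (real \<Rightarrow> real) \<Rightarrow> (real \<Rightarrow> real) \<Rightarrow> real \<Rightarrow> real \<Rightarrow> real" where
  "Wfun \<mu> \<beta> C \<tau> b = C \<tau> * exp (- Bfun \<beta> (exp \<tau> * b)) * (1 - b) powr (\<mu> - 1)"

definition Winf :: "real \<Rightarrow> real \<Rightarrow> real" where
  "Winf \<mu> b = b powr (-\<mu>) * (1 - b) powr (\<mu> - 1) /
     integral {0..1} (\<lambda>b'. b' powr (-\<mu>) * (1 - b') powr (\<mu> - 1))"

end

theory Submission
  imports Defs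
begin

text \<open>
  Write \<open>W(\<tau>, b) = u(\<tau>, b) / U(\<tau>)\<close> with \<open>u(\<tau>, b) = exp (- B (e\<^sup>\<tau> b)) (1 - b)\<^sup>\<mu>\<^sup>-\<^sup>1\<close> and
  \<open>U(\<tau>) = \<integral>\<^sub>0\<^sup>1 u(\<tau>, b) db\<close>. With the rate \<open>k(\<tau>, b) = e\<^sup>\<tau> b \<beta>(e\<^sup>\<tau> b)\<close> and its mean
  \<open>m(\<tau>) = \<integral>\<^sub>0\<^sup>1 k W db\<close> one has \<open>\<partial>\<^sub>\<tau> W = W (m - k)\<close>. Since \<open>\<integral>\<^sub>0\<^sup>1 W db = 1\<close>, the mean satisfies
  \<open>|m - \<mu>| \<le> \<integral>\<^sub>0\<^sup>1 |k - \<mu>| W db\<close>, hence \<open>\<integral>\<^sub>0\<^sup>1 |\<partial>\<^sub>\<tau> W| db \<le> 2 \<integral>\<^sub>0\<^sup>1 |k - \<mu>| W db\<close>. Integrating in time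
  from \<open>\<tau>\<close> to \<open>\<infinity>\<close> and using that \<open>W(\<tau>', b) \<rightarrow> W\<^sub>\<infinity>(b)\<close> pointwise (because
  \<open>B(a) = \<mu> ln (1 + a) + \<integral>\<^sub>0\<^sup>a g\<close> with \<open>g \<in> L\<^sup>1\<close>) gives the bound.

  As \<open>\<beta>\<close> is only monotone, \<open>B\<close> is differentiable off the countable set of discontinuities of \<open>\<beta>\<close>,
  so the fundamental theorem of calculus is used in a form that allows countably many exceptional
  points.
\<close>

lemma dominated_convergence_countable_exception:
  fixes f :: "nat \<Rightarrow> real \<Rightarrow> real" and F h :: "real \<Rightarrow> real"
  assumes f: "\<And>n. f n integrable_on {a..b}" and h: "h integrable_on {a..b}" and E: "countable E"
    and le: "\<And>n x. x \<in> {a<..<b} - E \<Longrightarrow> \<bar>f n x\<bar> \<le> h x"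
    and lim: "\<And>x. x \<in> {a<..<b} - E \<Longrightarrow> (\<lambda>n. f n x) \<longlonglongrightarrow> F x"
  shows "(\<lambda>n. integral {a..b} (f n)) \<longlonglongrightarrow> integral {a..b} F"
proof -
  define S where "S = {a<..<b} - E"
  have N: "negligible ({a, b} \<union> E)"
    using E by (simp add: negligible_iff_null_sets null_sets_completionI countable_imp_null_set_lborel)
  have negl: "negligible {x \<in> {a..b} - S. p x \<noteq> 0}" "negligible {x \<in> S - {a..b}. p x \<noteq> 0}"
    for p :: "real \<Rightarrow> real"
    by (rule negligible_subset[OF N]; force simp: S_def)+
  have "(\<lambda>n. integral S (f n)) \<longlonglongrightarrow> integral S F"
    using le lim by (intro dominated_convergence(2)[where h=h] integrable_spike_set[OF f negl]
        integrable_spike_set[OF h negl]) (auto simp: S_def)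
  moreover have "integral {a..b} p = integral S p" for p :: "real \<Rightarrow> real"
    by (rule integral_spike_set[OF negl])
  ultimately show ?thesis by simp
qed

lemma last_crossing_point:
  fixes h :: "real \<Rightarrow> real"
  assumes cont: "continuous_on {a..b} h" and "a \<le> b" and y: "h b < y" "y \<le> h a"
  obtains x0 where "x0 \<in> {a..<b}" "h x0 = y" "\<And>x. x \<in> {x0<..b} \<Longrightarrow> h x < y"
proof -
  define T where "T = {a..b} \<inter> h -` {y..}"
  have "compact T"
    unfolding T_def compact_eq_bounded_closed
    by (auto intro: continuous_closed_preimage cont bounded_subset[of "{a..b}"])
  moreover have "a \<in> T" using y \<open>a \<le> b\<close> by (auto simp: T_def)
  ultimately obtain x0 where x0: "x0 \<in> T" "\<And>x. x \<in> T \<Longrightarrow> x \<le> x0"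
    using compact_attains_sup[of T] by blast
  have x0ab: "a \<le> x0" "x0 < b" "y \<le> h x0" using x0(1) y by (auto simp: T_def less_le)
  have "h x0 = y"
  proof (rule ccontr)
    assume "h x0 \<noteq> y"
    then obtain x1 where "x0 \<le> x1" "x1 \<le> b" "h x1 = y"
      using IVT2'[of h b y x0] x0ab y continuous_on_subset[OF cont, of "{x0..b}"] by auto
    then have "x1 \<in> T" using x0ab by (auto simp: T_def)
    with x0(2) \<open>x0 \<le> x1\<close> \<open>h x1 = y\<close> \<open>h x0 \<noteq> y\<close> show False by force
  qed
  moreover have "h x < y" if "x \<in> {x0<..b}" for x
    using x0(2)[of x] that x0ab by (force simp: T_def)
  ultimately show ?thesis using that x0ab by auto
qed

lemma mono_if_nonneg_deriv_countable_exception: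
  fixes g :: "real \<Rightarrow> real"
  assumes "a \<le> b" and cont: "continuous_on {a..b} g" and S: "countable S"
    and der: "\<And>x. x \<in> {a<..<b} - S \<Longrightarrow> \<exists>D\<ge>0. (g has_real_derivative D) (at x)"
  shows "g a \<le> g b"
proof (rule ccontr)
  assume "\<not> g a \<le> g b"
  then have "g b < g a" by simp
  define \<epsilon> where "\<epsilon> = (g a - g b) / (2 * (b - a))"
  define h where "h x = g x + \<epsilon> * (x - a)" for x
  have "a < b" using \<open>a \<le> b\<close> \<open>g b < g a\<close> by (cases "a = b") auto
  then have "\<epsilon> > 0" "\<epsilon> * (b - a) = (g a - g b) / 2"
    using \<open>g b < g a\<close> by (auto simp: \<epsilon>_def field_simps)
  then have "h b < h a" using \<open>g b < g a\<close> by (simp add: h_def)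
  \<comment> \<open>Choosing a level outside the countable set \<open>h ` S\<close> makes the last crossing point non-exceptional.\<close>
  have "uncountable ({h b<..<h a} - h ` S)"
    using uncountable_open_interval[of "h b" "h a"] \<open>h b < h a\<close> countable_image[OF S, of h]
    by (metis countable_Un_iff Diff_Un Un_Diff_cancel2 sup.commute uncountable_infinite)
  then obtain y where y: "h b < y" "y < h a" "y \<notin> h ` S"
    by (metis Diff_iff countable_empty ex_in_conv greaterThanLessThan_iff)
  have hcont: "continuous_on {a..b} h" unfolding h_def by (intro continuous_intros cont)
  obtain x0 where x0: "x0 \<in> {a..<b}" "h x0 = y" and below: "\<And>x. x \<in> {x0<..b} \<Longrightarrow> h x < y"
    using last_crossing_point[OF hcont \<open>a \<le> b\<close>, of y] y by auto
  have "x0 \<in> {a<..<b} - S" using x0 y by (auto simp: less_le)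
  then obtain D where "D \<ge> 0" "(g has_real_derivative D) (at x0)" using der by blast
  then have "(h has_real_derivative D + \<epsilon>) (at x0)"
    unfolding h_def by (auto intro!: derivative_eq_intros)
  then obtain d where d: "d > 0" "\<And>e. e > 0 \<Longrightarrow> e < d \<Longrightarrow> h x0 < h (x0 + e)"
    using DERIV_pos_inc_right \<open>D \<ge> 0\<close> \<open>\<epsilon> > 0\<close> by (metis add_nonneg_pos)
  define e where "e = min d (b - x0) / 2"
  have "e > 0" "e < d" "x0 + e \<le> b" using d x0 by (auto simp: e_def min_def field_simps)
  then show False using d(2)[of e] below[of "x0 + e"] x0 by auto
qed

lemma abs_diff_le_integral_if_deriv_bounded:
  fixes f f' \<phi> :: "real \<Rightarrow> real"
  assumes "a \<le> b" and f: "continuous_on {a..b} f" and S: "countable S"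
    and \<phi>: "\<phi> integrable_on {a..b}"
    and der: "\<And>x. x \<in> {a<..<b} - S \<Longrightarrow>
        (f has_real_derivative f' x) (at x) \<and> \<bar>f' x\<bar> \<le> \<phi> x \<and> isCont \<phi> x"
  shows "\<bar>f b - f a\<bar> \<le> integral {a..b} \<phi>"
proof -
  define \<Phi> where "\<Phi> x = integral {a..x} \<phi>" for x
  have \<Phi>_cont: "continuous_on {a..b} \<Phi>"
    unfolding \<Phi>_def by (rule indefinite_integral_continuous_1[OF \<phi>])
  have \<Phi>_deriv: "(\<Phi> has_real_derivative \<phi> x) (at x)" if x: "x \<in> {a<..<b} - S" for x
  proof -
    have "(\<Phi> has_vector_derivative \<phi> x) (at x within {a..b})"
      unfolding \<Phi>_def using x der[OF x]
      by (intro integral_has_vector_derivative_continuous_at[OF \<phi>, where S="{}", simplified])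
        (auto intro: continuous_at_imp_continuous_within)
    moreover have "x \<in> interior {a..b}" using x by simp
    ultimately show ?thesis
      unfolding has_real_derivative_iff_has_vector_derivative by (metis at_within_interior)
  qed
  have "\<Phi> a + s * f a \<le> \<Phi> b + s * f b" if s: "s = 1 \<or> s = -1" for s
  proof (rule mono_if_nonneg_deriv_countable_exception[OF \<open>a \<le> b\<close> _ S])
    show "continuous_on {a..b} (\<lambda>x. \<Phi> x + s * f x)" by (intro continuous_intros \<Phi>_cont f)
    fix x assume x: "x \<in> {a<..<b} - S"
    have "((\<lambda>x. \<Phi> x + s * f x) has_real_derivative \<phi> x + s * f' x) (at x)"
      using der[OF x] \<Phi>_deriv[OF x] by (auto intro!: derivative_eq_intros)
    moreover have "\<phi> x + s * f' x \<ge> 0" using der[OF x] s by auto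
    ultimately show "\<exists>D\<ge>0. ((\<lambda>x. \<Phi> x + s * f x) has_real_derivative D) (at x)" by blast
  qed
  from this[of 1] this[of "-1"] show ?thesis by (simp add: \<Phi>_def)
qed

lemma abs_exp_diff_le: "\<bar>exp s - exp t\<bar> \<le> exp (max s t) * \<bar>s - t\<bar>" for s t :: real
proof -
  have "exp y - exp x \<le> exp y * (y - x)" if "x \<le> y" for x y :: real
  proof -
    have "1 - (y - x) \<le> exp (x - y)" using exp_ge_add_one_self[of "x - y"] by linarith
    then have "exp y * (1 - (y - x)) \<le> exp y * exp (x - y)" by (intro mult_left_mono) auto
    then show ?thesis by (simp add: exp_diff algebra_simps)
  qed
  from this[of s t] this[of t s] show ?thesis by (cases "s \<le> t") (auto simp: max_def)
qed

lemma abs_exp_neg_diff_le: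
  fixes x y :: real
  assumes "0 \<le> x" "0 \<le> y"
  shows "\<bar>exp (- x) - exp (- y)\<bar> \<le> \<bar>x - y\<bar>"
proof -
  have "exp (max (- x) (- y)) * \<bar>x - y\<bar> \<le> 1 * \<bar>x - y\<bar>"
    using assms by (intro mult_right_mono) (auto simp: max_def)
  then show ?thesis using abs_exp_diff_le[of "- x" "- y"] by (simp add: abs_minus_commute)
qed

lemma convergent_sequence_abs_bound:
  fixes X :: "nat \<Rightarrow> real"
  assumes "X \<longlonglongrightarrow> t"
  obtains R where "\<And>i. \<bar>X i\<bar> \<le> R" "\<bar>t\<bar> \<le> R"
proof -
  obtain K where K: "\<And>n. norm (X n) \<le> K"
    using convergent_imp_Bseq[OF convergentI[OF assms]] BseqE by metis
  show ?thesis
  proof (rule that)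
    show "\<bar>X i\<bar> \<le> max K \<bar>t\<bar>" for i using K[of i] by auto
  qed auto
qed

lemma Beta_real_pos: "0 < a \<Longrightarrow> 0 < b \<Longrightarrow> 0 < Beta a (b::real)"
  by (simp add: Beta_def Gamma_real_pos)

lemma borel_measurable_lebesgue_on_if_borel:
  "f \<in> borel_measurable borel \<Longrightarrow> f \<in> borel_measurable (lebesgue_on S)"
  using measurable_comp[OF id_borel_measurable_lebesgue_on[of S], of f borel] by simp

locale rescaled_profile =
  fixes \<mu> :: real and \<beta> :: "real \<Rightarrow> real"
  assumes mu_pos: "0 < \<mu>" and mu_less_1: "\<mu> < 1"
    and beta_pos: "\<And>a. 0 \<le> a \<Longrightarrow> 0 < \<beta> a"
    and beta_antimono: "\<And>a b. 0 \<le> a \<Longrightarrow> a \<le> b \<Longrightarrow> \<beta> b \<le> \<beta> a"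
begin

lemma beta_le_beta0: "0 \<le> x \<Longrightarrow> \<beta> x \<le> \<beta> 0"
  using beta_antimono by auto

lemma beta_integrable_on: assumes "0 \<le> x" shows "\<beta> integrable_on {x..y}"
proof -
  have "mono_on {x..y} (\<lambda>a. - \<beta> a)" using assms beta_antimono by (auto simp: mono_on_def)
  then have "(\<lambda>a. - (- \<beta> a)) integrable_on {x..y}" by (intro integrable_neg integrable_on_mono_on)
  then show ?thesis by simp
qed

lemma Bfun_split: "0 \<le> x \<Longrightarrow> x \<le> y \<Longrightarrow> Bfun \<beta> y = Bfun \<beta> x + integral {x..y} \<beta>"
  unfolding Bfun_def by (metis Henstock_Kurzweil_Integration.integral_combine beta_integrable_on order_refl)

lemma Bfun_diff_bounds:
  assumes "0 \<le> x" "x \<le> y"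
  shows "0 \<le> Bfun \<beta> y - Bfun \<beta> x" "Bfun \<beta> y - Bfun \<beta> x \<le> \<beta> 0 * (y - x)"
proof -
  have "0 \<le> integral {x..y} \<beta>"
    using assms beta_pos[THEN less_imp_le] by (intro integral_nonneg beta_integrable_on) auto
  then show "0 \<le> Bfun \<beta> y - Bfun \<beta> x" using Bfun_split[OF assms] by simp
  have "integral {x..y} \<beta> \<le> integral {x..y} (\<lambda>_. \<beta> 0)"
    using assms beta_le_beta0 by (intro integral_le beta_integrable_on) auto
  then show "Bfun \<beta> y - Bfun \<beta> x \<le> \<beta> 0 * (y - x)"
    using Bfun_split[OF assms] assms by (simp add: mult.commute)
qed

lemma Bfun_nonneg: "0 \<le> Bfun \<beta> x"
  using Bfun_diff_bounds(1)[of 0 x] by (cases "0 \<le> x") (auto simp: Bfun_def)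

lemma Bfun_mono: "x \<le> y \<Longrightarrow> Bfun \<beta> x \<le> Bfun \<beta> y"
  using Bfun_diff_bounds(1)[of x y] Bfun_nonneg[of y] by (cases "0 \<le> x") (auto simp: Bfun_def)

lemma Bfun_lipschitz: "0 \<le> x \<Longrightarrow> 0 \<le> y \<Longrightarrow> \<bar>Bfun \<beta> y - Bfun \<beta> x\<bar> \<le> \<beta> 0 * \<bar>y - x\<bar>"
  using Bfun_diff_bounds[of x y] Bfun_diff_bounds[of y x] by (cases "x \<le> y") auto

lemma borel_measurable_Bfun[measurable]: "Bfun \<beta> \<in> borel_measurable borel"
  by (rule borel_measurable_mono) (auto simp: mono_def Bfun_mono)

lemma isCont_Bfun: assumes "0 < x" shows "isCont (Bfun \<beta>) x"
proof -
  have "continuous_on {0..x + 1} (Bfun \<beta>)"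
    unfolding Bfun_def[abs_def] by (intro indefinite_integral_continuous_1 beta_integrable_on) simp
  then show ?thesis using assms by (intro continuous_on_interior[of "{0..x + 1}"]) auto
qed

lemma Bfun_has_real_derivative:
  assumes "0 < x" and "isCont \<beta> x"
  shows "(Bfun \<beta> has_real_derivative \<beta> x) (at x)"
proof -
  have "(Bfun \<beta> has_vector_derivative \<beta> x) (at x within {0..x + 1})"
    unfolding Bfun_def[abs_def] using assms
    by (intro integral_has_vector_derivative_continuous_at[where S="{}", simplified]
        beta_integrable_on) (auto intro: continuous_at_imp_continuous_within)
  moreover have "x \<in> interior {0..x + 1}" using assms by simp
  ultimately show ?thesis
    unfolding has_real_derivative_iff_has_vector_derivative by (metis at_within_interior)
qed

definition beta_discont :: "real set" where
  "beta_discont = {x \<in> {0<..}. \<not> isCont \<beta> x}"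

lemma countable_beta_discont: "countable beta_discont"
proof -
  have "mono_on {0<..} (\<lambda>x. - \<beta> x)" using beta_antimono by (auto simp: mono_on_def)
  then have "countable {a \<in> {0<..}. \<not> isCont (\<lambda>x. - \<beta> x) a}"
    by (intro mono_on_ctble_discont_open) auto
  moreover have "isCont \<beta> a" if "isCont (\<lambda>x. - \<beta> x) a" for a
    using isCont_minus[OF that] by simp
  ultimately show ?thesis
    unfolding beta_discont_def by (metis (mono_tags, lifting) countable_subset mem_Collect_eq subsetI)
qed

definition weight :: "real \<Rightarrow> real" where
  "weight b = (1 - b) powr (\<mu> - 1)"

definition profile :: "real \<Rightarrow> real \<Rightarrow> real" where
  "profile t b = exp (- Bfun \<beta> (exp t * b)) * weight b"

definition mass :: "real \<Rightarrow> real" where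
  "mass t = integral {0..1} (profile t)"

text \<open>The hypotheses constrain \<open>\<beta>\<close> on \<open>[0, \<infinity>)\<close> only; extending it constantly to the left
  makes the rate below Borel measurable as a function on all of \<open>\<real>\<close>.\<close>
definition beta_ext :: "real \<Rightarrow> real" where
  "beta_ext x = \<beta> (max 0 x)"

definition rate :: "real \<Rightarrow> real \<Rightarrow> real" where
  "rate t b = exp t * b * beta_ext (exp t * b)"

definition rate_mass :: "real \<Rightarrow> real" where
  "rate_mass t = integral {0..1} (\<lambda>b. rate t b * profile t b)"

lemma rate_eq: "0 \<le> b \<Longrightarrow> rate t b = exp t * b * \<beta> (exp t * b)"
  by (simp add: rate_def beta_ext_def)

lemma weight_nonneg: "0 \<le> weight b"
  by (simp add: weight_def)

lemma borel_measurable_weight[measurable]: "weight \<in> borel_measurable borel"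
  unfolding weight_def by measurable

lemma weight_has_integral: "(weight has_integral Beta 1 \<mu>) {0..1}"
proof -
  have "((\<lambda>t. t powr (1 - 1) * (1 - t) powr (\<mu> - 1)) has_integral Beta 1 \<mu>) {0..1}"
    using has_integral_Beta_real[of 1 \<mu>] mu_pos by auto
  then show ?thesis
    by (rule has_integral_spike_finite[where S="{0}", rotated 2]) (auto simp: weight_def)
qed

lemma weight_integrable: "weight integrable_on {0..1}"
  using weight_has_integral by blast

lemma integrable_on_01_if_bounded_by_weight:
  assumes "f \<in> borel_measurable borel" and "\<And>b. b \<in> {0..1} \<Longrightarrow> \<bar>f b\<bar> \<le> c * weight b"
  shows "f integrable_on {0..1}"
  using assms
  by (intro measurable_bounded_by_integrable_imp_integrable[of f _ "\<lambda>b. c * weight b"])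
    (auto intro: borel_measurable_lebesgue_on_if_borel integrable_on_cmult_left[OF weight_integrable, simplified])

lemma borel_measurable_profile[measurable]: "profile t \<in> borel_measurable borel"
  unfolding profile_def by measurable

lemma profile_bounds: "b \<in> {0..1} \<Longrightarrow> 0 \<le> profile t b \<and> profile t b \<le> weight b"
  using Bfun_nonneg[of "exp t * b"] weight_nonneg[of b]
  by (auto simp: profile_def intro!: mult_left_le_one_le)

lemma profile_integrable: "profile t integrable_on {0..1}"
  by (rule integrable_on_01_if_bounded_by_weight[where c=1]) (use profile_bounds in auto)

lemma borel_measurable_beta_ext[measurable]: "beta_ext \<in> borel_measurable borel"
proof -
  have "mono (\<lambda>x. - beta_ext x)" unfolding mono_def beta_ext_def using beta_antimono by auto
  then have "(\<lambda>x. - (- beta_ext x)) \<in> borel_measurable borel"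
    by (intro borel_measurable_uminus borel_measurable_mono)
  then show ?thesis by simp
qed

lemma isCont_beta_ext: "0 < x \<Longrightarrow> isCont \<beta> x \<Longrightarrow> isCont beta_ext x"
  unfolding beta_ext_def
  by (rule isCont_o2[where f="max 0"]) (auto intro: continuous_intros simp: max_def)

lemma borel_measurable_rate[measurable]: "rate t \<in> borel_measurable borel"
  unfolding rate_def by measurable

lemma rate_bounds: "b \<in> {0..1} \<Longrightarrow> 0 \<le> rate t b \<and> rate t b \<le> exp t * \<beta> 0"
proof -
  assume b: "b \<in> {0..1}"
  then have x: "0 \<le> exp t * b" by auto
  have "b * \<beta> (exp t * b) \<le> 1 * \<beta> 0"
    using b beta_pos[OF x] beta_le_beta0[OF x] by (intro mult_mono) auto
  then show ?thesis using x b beta_pos[OF x] by (auto simp: rate_eq mult.assoc)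
qed

lemma rate_profile_integrable: "(\<lambda>b. rate t b * profile t b) integrable_on {0..1}"
proof (rule integrable_on_01_if_bounded_by_weight[where c="exp t * \<beta> 0"])
  fix b :: real assume b: "b \<in> {0..1}"
  show "\<bar>rate t b * profile t b\<bar> \<le> exp t * \<beta> 0 * weight b"
    using rate_bounds[OF b] profile_bounds[OF b] beta_pos[of 0]
    by (auto simp: abs_mult intro!: mult_mono)
qed measurable

lemma profile_has_derivative:
  assumes b: "b \<in> {0<..<1}" and cont: "exp t * b \<notin> beta_discont"
  shows "((\<lambda>s. profile s b) has_real_derivative - (rate t b * profile t b)) (at t)"
proof -
  have "0 < exp t * b" using b by auto
  then have "isCont \<beta> (exp t * b)" using cont by (auto simp: beta_discont_def)
  then have "((\<lambda>s. Bfun \<beta> (exp s * b)) has_real_derivative \<beta> (exp t * b) * (exp t * b)) (at t)"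
    using \<open>0 < exp t * b\<close> by (auto intro!: DERIV_chain2[OF Bfun_has_real_derivative] derivative_eq_intros)
  then have "((\<lambda>s. exp (- Bfun \<beta> (exp s * b)) * weight b) has_real_derivative
      exp (- Bfun \<beta> (exp t * b)) * (- (\<beta> (exp t * b) * (exp t * b))) * weight b) (at t)"
    by (auto intro!: derivative_eq_intros)
  then show ?thesis
    using b by (simp add: profile_def[abs_def] rate_eq algebra_simps)
qed

lemma profile_lipschitz:
  assumes b: "b \<in> {0..1}"
  shows "\<bar>profile s b - profile t b\<bar> \<le> \<beta> 0 * exp (max s t) * \<bar>s - t\<bar> * weight b"
proof -
  have "\<bar>profile s b - profile t b\<bar>
      = \<bar>exp (- Bfun \<beta> (exp s * b)) - exp (- Bfun \<beta> (exp t * b))\<bar> * weight b"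
    by (simp add: profile_def weight_nonneg left_diff_distrib[symmetric] abs_mult)
  also have "\<dots> \<le> \<bar>Bfun \<beta> (exp s * b) - Bfun \<beta> (exp t * b)\<bar> * weight b"
    by (intro mult_right_mono weight_nonneg abs_exp_neg_diff_le Bfun_nonneg)
  also have "\<dots> \<le> (\<beta> 0 * \<bar>exp s * b - exp t * b\<bar>) * weight b"
    using b by (intro mult_right_mono Bfun_lipschitz weight_nonneg) auto
  also have "\<bar>exp s * b - exp t * b\<bar> \<le> \<bar>exp s - exp t\<bar>"
    using b by (auto simp: left_diff_distrib[symmetric] abs_mult intro: mult_left_le)
  also have "\<bar>exp s - exp t\<bar> \<le> exp (max s t) * \<bar>s - t\<bar>" by (rule abs_exp_diff_le)
  finally show ?thesis using beta_pos[of 0] weight_nonneg[of b]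
    by (auto simp: mult_ac intro: mult_right_mono mult_left_mono)
qed

lemma scaled_notin_beta_discont: "b \<notin> (\<lambda>x. x / exp t) ` beta_discont \<Longrightarrow> exp t * b \<notin> beta_discont"
  by (metis image_eqI nonzero_mult_div_cancel_left exp_not_eq_zero)

lemma mass_has_derivative: "(mass has_real_derivative - rate_mass t) (at t)"
  unfolding has_field_derivative_iff
proof (subst tendsto_at_iff_sequentially, intro allI impI)
  define E where "E = (\<lambda>x. x / exp t) ` beta_discont"
  have E: "countable E" unfolding E_def using countable_beta_discont by simp
  fix X :: "nat \<Rightarrow> real" assume X: "\<forall>i. X i \<in> UNIV - {t}" "X \<longlonglongrightarrow> t"
  obtain R where R: "\<And>i. \<bar>X i\<bar> \<le> R" "\<bar>t\<bar> \<le> R"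
    using convergent_sequence_abs_bound[OF X(2)] by blast
  define q where "q n b = (profile (X n) b - profile t b) / (X n - t)" for n b
  have bound: "\<bar>q n b\<bar> \<le> \<beta> 0 * exp R * weight b" if b: "b \<in> {0..1}" for n b
  proof -
    have "\<bar>q n b\<bar> \<le> (\<beta> 0 * exp (max (X n) t) * \<bar>X n - t\<bar> * weight b) / \<bar>X n - t\<bar>"
      unfolding q_def abs_divide by (intro divide_right_mono profile_lipschitz b) auto
    also have "\<dots> = \<beta> 0 * exp (max (X n) t) * weight b" using X(1) by simp
    also have "\<dots> \<le> \<beta> 0 * exp R * weight b"
      using R(1)[of n] R(2) beta_pos[of 0] weight_nonneg[of b]
      by (intro mult_right_mono mult_left_mono) (auto simp: max_def)
    finally show ?thesis .
  qed
  have "(\<lambda>n. integral {0..1} (q n)) \<longlonglongrightarrow> integral {0..1} (\<lambda>b. - (rate t b * profile t b))"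
  proof (rule dominated_convergence_countable_exception[OF _ _ E])
    show "q n integrable_on {0..1}" for n
      by (rule integrable_on_01_if_bounded_by_weight[OF _ bound]) (simp add: q_def)
    show "(\<lambda>b. \<beta> 0 * exp R * weight b) integrable_on {0..1}"
      using integrable_on_cmult_left[OF weight_integrable] by simp
    fix b assume b: "b \<in> {0<..<1} - E"
    then have "((\<lambda>s. (profile s b - profile t b) / (s - t)) \<longlongrightarrow> - (rate t b * profile t b)) (at t)"
      using profile_has_derivative[of b t] scaled_notin_beta_discont[of b t]
      unfolding E_def has_field_derivative_iff by auto
    then show "(\<lambda>n. q n b) \<longlonglongrightarrow> - (rate t b * profile t b)"
      using X unfolding q_def tendsto_at_iff_sequentially by (auto simp: o_def)
  qed (use bound in auto)
  moreover have "integral {0..1} (q n) = (mass (X n) - mass t) / (X n - t)" for n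
    unfolding q_def mass_def by (simp add: integral_diff profile_integrable)
  ultimately show "((\<lambda>s. (mass s - mass t) / (s - t)) \<circ> X) \<longlonglongrightarrow> - rate_mass t"
    by (simp add: o_def rate_mass_def)
qed

lemma isCont_mass: "isCont mass t"
  using mass_has_derivative DERIV_isCont by blast

lemma isCont_rate: "b \<in> {0<..<1} \<Longrightarrow> exp t * b \<notin> beta_discont \<Longrightarrow> isCont (\<lambda>s. rate s b) t"
  unfolding rate_def
  by (intro continuous_intros isCont_o2[where f="\<lambda>s. exp s * b" and g=beta_ext] isCont_beta_ext)
    (auto simp: beta_discont_def)

lemma isCont_profile: "b \<in> {0..1} \<Longrightarrow> isCont (\<lambda>s. profile s b) t"
  unfolding profile_def
  by (cases "b = 0")
    (auto intro!: continuous_intros isCont_o2[where f="\<lambda>s. exp s * b" and g="Bfun \<beta>"] isCont_Bfun)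

lemma isCont_rate_mass: "isCont rate_mass t"
  unfolding continuous_at_sequentially
proof (intro allI impI)
  fix X :: "nat \<Rightarrow> real" assume X: "X \<longlonglongrightarrow> t"
  obtain R where R: "\<And>i. \<bar>X i\<bar> \<le> R" "\<bar>t\<bar> \<le> R"
    using convergent_sequence_abs_bound[OF X] by blast
  define E where "E = (\<lambda>x. x / exp t) ` beta_discont"
  have E: "countable E" unfolding E_def using countable_beta_discont by simp
  have "(\<lambda>n. integral {0..1} (\<lambda>b. rate (X n) b * profile (X n) b))
      \<longlonglongrightarrow> integral {0..1} (\<lambda>b. rate t b * profile t b)"
  proof (rule dominated_convergence_countable_exception[OF rate_profile_integrable _ E])
    show "(\<lambda>b. exp R * \<beta> 0 * weight b) integrable_on {0..1}"
      using integrable_on_cmult_left[OF weight_integrable] by simp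
    fix n and b :: real assume "b \<in> {0<..<1} - E"
    then have b: "b \<in> {0..1}" and cont: "exp t * b \<notin> beta_discont"
      using scaled_notin_beta_discont[of b t] by (auto simp: E_def)
    have "exp (X n) * \<beta> 0 \<le> exp R * \<beta> 0"
      using R(1)[of n] beta_pos[of 0] by (intro mult_right_mono) auto
    then show "\<bar>rate (X n) b * profile (X n) b\<bar> \<le> exp R * \<beta> 0 * weight b"
      using rate_bounds[OF b, of "X n"] profile_bounds[OF b, of "X n"]
      by (auto simp: abs_mult intro!: mult_mono)
    have "isCont (\<lambda>s. rate s b * profile s b) t"
      using \<open>b \<in> {0<..<1} - E\<close> isCont_rate[OF _ cont] isCont_profile[OF b]
      by (auto intro!: continuous_intros)
    then show "(\<lambda>n. rate (X n) b * profile (X n) b) \<longlonglongrightarrow> rate t b * profile t b"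
      using X by (rule isCont_tendsto_compose[where g="\<lambda>s. rate s b * profile s b"])
  qed
  then show "(rate_mass \<circ> X) \<longlonglongrightarrow> rate_mass t" by (simp add: rate_mass_def o_def)
qed

lemma mass_pos: "0 < mass t"
proof -
  define c where "c = exp (- Bfun \<beta> (exp t))"
  have "c * weight b \<le> profile t b" if "b \<in> {0..1}" for b
    unfolding c_def profile_def using that weight_nonneg[of b]
    by (intro mult_right_mono) (auto intro: Bfun_mono)
  then have "integral {0..1} (\<lambda>b. c * weight b) \<le> mass t"
    unfolding mass_def
    by (intro integral_le profile_integrable integrable_on_cmult_left[OF weight_integrable, simplified])
  moreover have "integral {0..1} (\<lambda>b. c * weight b) = c * Beta 1 \<mu>"
    using weight_has_integral by (simp add: integral_unique)
  moreover have "0 < c * Beta 1 \<mu>" using Beta_real_pos[of 1 \<mu>] mu_pos by (simp add: c_def)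
  ultimately show ?thesis by linarith
qed

lemma mass_antimono: "s \<le> t \<Longrightarrow> mass t \<le> mass s"
  unfolding mass_def profile_def
  by (intro integral_le profile_integrable[unfolded profile_def] mult_right_mono weight_nonneg)
    (auto intro!: Bfun_mono mult_right_mono)

lemma rate_mass_bounds: "0 \<le> rate_mass t \<and> rate_mass t \<le> exp t * \<beta> 0 * mass t"
proof -
  have "integral {0..1} (\<lambda>b. rate t b * profile t b) \<le> integral {0..1} (\<lambda>b. exp t * \<beta> 0 * profile t b)"
    using rate_bounds profile_bounds
    by (intro integral_le rate_profile_integrable integrable_on_cmult_left[OF profile_integrable, simplified])
      (auto intro!: mult_right_mono)
  moreover have "0 \<le> integral {0..1} (\<lambda>b. rate t b * profile t b)"
    using rate_bounds profile_bounds by (intro integral_nonneg rate_profile_integrable) auto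
  ultimately show ?thesis by (simp add: rate_mass_def mass_def)
qed

definition mean_rate :: "real \<Rightarrow> real" where
  "mean_rate t = rate_mass t / mass t"

text \<open>The arguments are swapped with respect to \<open>profile\<close>, so that \<open>normalized_profile b\<close> is
  the trajectory in time of the fixed point \<open>b\<close>.\<close>
definition normalized_profile :: "real \<Rightarrow> real \<Rightarrow> real" where
  "normalized_profile b t = profile t b / mass t"

definition deviation :: "real \<Rightarrow> real \<Rightarrow> real" where
  "deviation b t = normalized_profile b t * \<bar>mean_rate t - rate t b\<bar>"

lemma mean_rate_bounds: "0 \<le> mean_rate t \<and> mean_rate t \<le> exp t * \<beta> 0"
  using rate_mass_bounds[of t] mass_pos[of t] by (auto simp: mean_rate_def field_simps)

lemma normalized_profile_nonneg: "b \<in> {0..1} \<Longrightarrow> 0 \<le> normalized_profile b t"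
  using profile_bounds[of b t] mass_pos[of t] by (simp add: normalized_profile_def)

lemma deviation_nonneg: "b \<in> {0..1} \<Longrightarrow> 0 \<le> deviation b t"
  by (simp add: deviation_def normalized_profile_nonneg)

lemma borel_measurable_mass[measurable]: "mass \<in> borel_measurable borel"
  using isCont_mass by (intro borel_measurable_continuous_onI continuous_at_imp_continuous_on) auto

lemma borel_measurable_rate_mass[measurable]: "rate_mass \<in> borel_measurable borel"
  using isCont_rate_mass by (intro borel_measurable_continuous_onI continuous_at_imp_continuous_on) auto

lemma borel_measurable_deviation[measurable]: "deviation b \<in> borel_measurable borel"
  unfolding deviation_def normalized_profile_def mean_rate_def rate_def profile_def by measurable

lemma normalized_profile_has_derivative:
  assumes "b \<in> {0<..<1}" and "exp t * b \<notin> beta_discont"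
  shows "(normalized_profile b has_real_derivative normalized_profile b t * (mean_rate t - rate t b)) (at t)"
proof -
  have "((\<lambda>s. profile s b / mass s) has_real_derivative
      (- (rate t b * profile t b) * mass t - profile t b * (- rate_mass t)) / (mass t * mass t)) (at t)"
    using mass_pos[of t]
    by (intro DERIV_divide profile_has_derivative[OF assms] mass_has_derivative) auto
  moreover have "(- (rate t b * profile t b) * mass t - profile t b * (- rate_mass t)) / (mass t * mass t)
      = normalized_profile b t * (mean_rate t - rate t b)"
    using mass_pos[of t] by (simp add: normalized_profile_def mean_rate_def field_simps)
  ultimately show ?thesis by (simp add: normalized_profile_def[abs_def])
qed

lemma isCont_normalized_profile: "b \<in> {0..1} \<Longrightarrow> isCont (normalized_profile b) t"
  unfolding normalized_profile_def[abs_def] using mass_pos[of t]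
  by (intro continuous_intros isCont_profile isCont_mass) auto

lemma isCont_deviation:
  assumes "b \<in> {0<..<1}" and "exp t * b \<notin> beta_discont"
  shows "isCont (deviation b) t"
  unfolding deviation_def[abs_def] mean_rate_def[abs_def] using mass_pos[of t] assms
  by (intro continuous_intros isCont_normalized_profile isCont_rate isCont_rate_mass isCont_mass) auto

lemma deviation_integrable:
  assumes b: "b \<in> {0..1}"
  shows "deviation b integrable_on {\<tau>..s}"
proof (rule measurable_bounded_by_integrable_imp_integrable)
  define c where "c = weight b / mass s * (2 * exp (max \<tau> s) * \<beta> 0)"
  show "(\<lambda>_. c) integrable_on {\<tau>..s}" by (rule integrable_const_ivl)
  fix t assume t: "t \<in> {\<tau>..s}"
  have "normalized_profile b t \<le> weight b / mass s"
    unfolding normalized_profile_def using profile_bounds[OF b, of t] mass_antimono[of t s] mass_pos t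
    by (intro frac_le) auto
  moreover have "exp t * \<beta> 0 \<le> exp (max \<tau> s) * \<beta> 0"
    using t beta_pos[of 0] by (intro mult_right_mono) auto
  then have "\<bar>mean_rate t - rate t b\<bar> \<le> 2 * exp (max \<tau> s) * \<beta> 0"
    using mean_rate_bounds[of t] rate_bounds[OF b, of t] by (simp add: abs_le_iff)
  ultimately have "deviation b t \<le> c"
    unfolding deviation_def c_def using normalized_profile_nonneg[OF b] weight_nonneg[of b] mass_pos[of s] by (intro mult_mono) auto
  then show "norm (deviation b t) \<le> c" using deviation_nonneg[OF b] by simp
qed (auto intro: borel_measurable_lebesgue_on_if_borel)

lemma normalized_profile_variation_le:
  assumes b: "b \<in> {0<..<1}" and "\<tau> \<le> s"
  shows "\<bar>normalized_profile b s - normalized_profile b \<tau>\<bar> \<le> integral {\<tau>..s} (deviation b)"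
proof (rule abs_diff_le_integral_if_deriv_bounded[OF \<open>\<tau> \<le> s\<close> _ _ deviation_integrable])
  show "continuous_on {\<tau>..s} (normalized_profile b)"
    using b by (intro continuous_at_imp_continuous_on ballI isCont_normalized_profile) auto
  \<comment> \<open>The exceptional times are those at which \<open>exp t * b\<close> hits a discontinuity of \<open>\<beta>\<close>.\<close>
  show "countable (ln ` (\<lambda>x. x / b) ` beta_discont)" using countable_beta_discont by simp
  fix t assume t: "t \<in> {\<tau><..<s} - ln ` (\<lambda>x. x / b) ` beta_discont"
  have cont: "exp t * b \<notin> beta_discont"
  proof
    assume "exp t * b \<in> beta_discont"
    then have "ln (exp t * b / b) \<in> ln ` (\<lambda>x. x / b) ` beta_discont" by blast
    then show False using t b by simp
  qed
  have "\<bar>normalized_profile b t * (mean_rate t - rate t b)\<bar> \<le> deviation b t"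
    using normalized_profile_nonneg[of b t] b by (simp add: deviation_def abs_mult)
  then show "(normalized_profile b has_real_derivative normalized_profile b t * (mean_rate t - rate t b)) (at t) \<and>
      \<bar>normalized_profile b t * (mean_rate t - rate t b)\<bar> \<le> deviation b t \<and> isCont (deviation b) t"
    using normalized_profile_has_derivative[OF b cont] isCont_deviation[OF b cont] by blast
qed (use b in auto)

lemma borel_measurable_normalized_profile[measurable]:
  "(\<lambda>b. normalized_profile b t) \<in> borel_measurable borel"
  unfolding normalized_profile_def by measurable

lemma normalized_profile_has_integral: "((\<lambda>b. normalized_profile b t) has_integral 1) {0..1}"
proof -
  have "((\<lambda>b. profile t b / mass t) has_integral mass t / mass t) {0..1}"
    unfolding mass_def by (intro has_integral_divide integrable_integral profile_integrable)
  then show ?thesis using mass_pos[of t] by (simp add: normalized_profile_def)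
qed

lemma rate_normalized_profile_has_integral:
  "((\<lambda>b. rate t b * normalized_profile b t) has_integral mean_rate t) {0..1}"
proof -
  have "((\<lambda>b. rate t b * profile t b / mass t) has_integral rate_mass t / mass t) {0..1}"
    unfolding rate_mass_def by (intro has_integral_divide integrable_integral rate_profile_integrable)
  then show ?thesis by (simp add: normalized_profile_def mean_rate_def)
qed

definition rate_error :: "real \<Rightarrow> real" where
  "rate_error t = integral {0..1} (\<lambda>b. \<bar>rate t b - \<mu>\<bar> * normalized_profile b t)"

lemma rate_error_integrable:
  "(\<lambda>b. \<bar>rate t b - \<mu>\<bar> * normalized_profile b t) integrable_on {0..1}"
proof (rule integrable_on_01_if_bounded_by_weight[where c="(exp t * \<beta> 0 + \<mu>) / mass t"])
  show "(\<lambda>b. \<bar>rate t b - \<mu>\<bar> * normalized_profile b t) \<in> borel_measurable borel"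
    by measurable
  fix b :: real assume b: "b \<in> {0..1}"
  have "\<bar>rate t b - \<mu>\<bar> \<le> exp t * \<beta> 0 + \<mu>"
    using rate_bounds[OF b, of t] mu_pos by (simp add: abs_le_iff)
  moreover have "normalized_profile b t \<le> weight b / mass t"
    using profile_bounds[OF b, of t] mass_pos[of t] by (auto simp: normalized_profile_def divide_right_mono)
  ultimately have "\<bar>rate t b - \<mu>\<bar> * normalized_profile b t \<le> (exp t * \<beta> 0 + \<mu>) * (weight b / mass t)"
    using normalized_profile_nonneg[OF b, of t] by (intro mult_mono) auto
  then show "\<bar>\<bar>rate t b - \<mu>\<bar> * normalized_profile b t\<bar> \<le> (exp t * \<beta> 0 + \<mu>) / mass t * weight b"
    using normalized_profile_nonneg[OF b, of t] by simp
qed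

lemma abs_mean_rate_diff_le: "\<bar>mean_rate t - \<mu>\<bar> \<le> rate_error t"
proof -
  have "((\<lambda>b. (rate t b - \<mu>) * normalized_profile b t) has_integral mean_rate t - \<mu> * 1) {0..1}"
    unfolding left_diff_distrib
    by (intro has_integral_diff has_integral_mult_right rate_normalized_profile_has_integral
        normalized_profile_has_integral)
  then have "\<bar>mean_rate t - \<mu>\<bar> = norm (integral {0..1} (\<lambda>b. (rate t b - \<mu>) * normalized_profile b t))"
    by (simp add: integral_unique)
  also have "\<dots> \<le> rate_error t"
    unfolding rate_error_def using \<open>(_ has_integral _) _\<close> normalized_profile_nonneg
    by (intro integral_norm_bound_integral rate_error_integrable) (auto simp: abs_mult)
  finally show ?thesis .
qed

lemma rate_error_nonneg: "0 \<le> rate_error t"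
  unfolding rate_error_def
  using normalized_profile_nonneg by (intro integral_nonneg rate_error_integrable) auto

text \<open>Splitting \<open>mean_rate t - rate t b = (mean_rate t - \<mu>) + (\<mu> - rate t b)\<close>, the first term is
  itself bounded by \<open>rate_error t\<close>; this is where the factor 2 comes from.\<close>
lemma deviation_le:
  assumes "b \<in> {0..1}"
  shows "deviation b t \<le> \<bar>rate t b - \<mu>\<bar> * normalized_profile b t + rate_error t * normalized_profile b t"
proof -
  have "\<bar>mean_rate t - rate t b\<bar> \<le> \<bar>rate t b - \<mu>\<bar> + rate_error t"
    using abs_mean_rate_diff_le[of t] by linarith
  then have "deviation b t \<le> normalized_profile b t * (\<bar>rate t b - \<mu>\<bar> + rate_error t)"
    using normalized_profile_nonneg[OF assms, of t] unfolding deviation_def by (rule mult_left_mono)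
  then show ?thesis by (simp add: algebra_simps)
qed

lemma nn_integral_deviation_le:
  "(\<integral>\<^sup>+ b\<in>{0..1}. ennreal (deviation b t) \<partial>lborel)
     \<le> 2 * (\<integral>\<^sup>+ b\<in>{0..1}. ennreal (\<bar>rate t b - \<mu>\<bar> * normalized_profile b t) \<partial>lborel)"
proof -
  let ?H = "rate_error t"
  have H: "(\<integral>\<^sup>+ b\<in>{0..1}. ennreal (\<bar>rate t b - \<mu>\<bar> * normalized_profile b t) \<partial>lborel) = ennreal ?H"
    unfolding rate_error_def using normalized_profile_nonneg
    by (intro nn_integral_has_integral_lebesgue' integrable_integral rate_error_integrable) auto
  have one: "(\<integral>\<^sup>+ b\<in>{0..1}. ennreal (normalized_profile b t) \<partial>lborel) = 1"
    using nn_integral_has_integral_lebesgue'[OF _ normalized_profile_has_integral]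
      normalized_profile_nonneg by simp
  have "ennreal (deviation b t) * indicator {0..1} b
      \<le> ennreal (\<bar>rate t b - \<mu>\<bar> * normalized_profile b t) * indicator {0..1} b
        + ennreal ?H * (ennreal (normalized_profile b t) * indicator {0..1} b)" for b
  proof (cases "b \<in> {0..1}")
    case True
    then have "ennreal (deviation b t)
        \<le> ennreal (\<bar>rate t b - \<mu>\<bar> * normalized_profile b t + ?H * normalized_profile b t)"
      by (intro ennreal_leI deviation_le)
    also have "\<dots> = ennreal (\<bar>rate t b - \<mu>\<bar> * normalized_profile b t)
        + ennreal ?H * ennreal (normalized_profile b t)"
      using normalized_profile_nonneg[OF True, of t] rate_error_nonneg[of t]
      by (simp add: ennreal_plus ennreal_mult)
    finally show ?thesis using True by simp
  qed simp
  then have "(\<integral>\<^sup>+ b\<in>{0..1}. ennreal (deviation b t) \<partial>lborel)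
      \<le> (\<integral>\<^sup>+ b. ennreal (\<bar>rate t b - \<mu>\<bar> * normalized_profile b t) * indicator {0..1} b
        + ennreal ?H * (ennreal (normalized_profile b t) * indicator {0..1} b) \<partial>lborel)"
    by (rule nn_integral_mono)
  also have "\<dots> = (\<integral>\<^sup>+ b\<in>{0..1}. ennreal (\<bar>rate t b - \<mu>\<bar> * normalized_profile b t) \<partial>lborel)
      + ennreal ?H * (\<integral>\<^sup>+ b\<in>{0..1}. ennreal (normalized_profile b t) \<partial>lborel)"
    by (subst nn_integral_add) (auto simp: nn_integral_cmult)
  finally show ?thesis by (simp add: H one mult_2)
qed

lemma nn_integral_deviation_swap:
  "(\<integral>\<^sup>+ b\<in>{0..1}. (\<integral>\<^sup>+ t\<in>{\<tau>..}. ennreal (deviation b t) \<partial>lborel) \<partial>lborel)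
    = (\<integral>\<^sup>+ t\<in>{\<tau>..}. (\<integral>\<^sup>+ b\<in>{0..1}. ennreal (deviation b t) \<partial>lborel) \<partial>lborel)"
proof -
  define F where "F b t = ennreal (deviation b t) * indicator {\<tau>..} t * indicator {0..1::real} b" for b t
  have "case_prod F \<in> borel_measurable (lborel \<Otimes>\<^sub>M lborel)"
    unfolding F_def deviation_def normalized_profile_def mean_rate_def rate_def profile_def by measurable
  then have "(\<integral>\<^sup>+ t. (\<integral>\<^sup>+ b. F b t \<partial>lborel) \<partial>lborel) = (\<integral>\<^sup>+ b. (\<integral>\<^sup>+ t. F b t \<partial>lborel) \<partial>lborel)"
    by (rule lborel_pair.Fubini')
  moreover have "(\<lambda>b. deviation b t) \<in> borel_measurable borel" for t
    unfolding deviation_def normalized_profile_def mean_rate_def rate_def profile_def by measurable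
  then have "(\<integral>\<^sup>+ b. F b t \<partial>lborel) = (\<integral>\<^sup>+ b\<in>{0..1}. ennreal (deviation b t) \<partial>lborel) * indicator {\<tau>..} t"
    for t unfolding F_def by (subst nn_integral_multc[symmetric]) (auto simp: mult_ac)
  moreover have "(\<integral>\<^sup>+ t. F b t \<partial>lborel) = (\<integral>\<^sup>+ t\<in>{\<tau>..}. ennreal (deviation b t) \<partial>lborel) * indicator {0..1} b"
    for b unfolding F_def by (subst nn_integral_multc[symmetric]) auto
  ultimately show ?thesis by simp
qed

lemma Wfun_eq_normalized_profile:
  assumes "integral {0..1} (Wfun \<mu> \<beta> C t) = 1"
  shows "Wfun \<mu> \<beta> C t b = normalized_profile b t"
proof -
  have W: "Wfun \<mu> \<beta> C t = (\<lambda>b. C t * profile t b)"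
    by (simp add: Wfun_def profile_def weight_def fun_eq_iff mult.assoc)
  then have "C t * mass t = 1" using assms by (simp add: mass_def)
  then show ?thesis using mass_pos[of t] by (simp add: W normalized_profile_def field_simps)
qed

end

locale rescaled_profile_convergent = rescaled_profile +
  fixes g :: "real \<Rightarrow> real"
  assumes beta_decomp: "\<And>a. 0 \<le> a \<Longrightarrow> \<beta> a = \<mu> / (1 + a) + g a"
    and g_integrable: "g absolutely_integrable_on {0..}"
begin

lemma g_integrable_on: "g integrable_on {0..x}"
  using absolutely_integrable_on_subinterval[OF g_integrable] by (auto intro: set_lebesgue_integral_eq_integral)

lemma tendsto_integral_g: "((\<lambda>x. integral {0..x} g) \<longlongrightarrow> integral {0..} g) at_top"
proof -
  have "((\<lambda>x. LINT s:{0..x}|lebesgue. g s) \<longlongrightarrow> (LINT s:{0..}|lebesgue. g s)) at_top"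
    using g_integrable by (intro tendsto_set_lebesgue_integral_at_top) auto
  moreover have "(LINT s:{0..x}|lebesgue. g s) = integral {0..x} g" for x
    by (intro set_lebesgue_integral_eq_integral(2) absolutely_integrable_on_subinterval[OF g_integrable]) auto
  moreover have "(LINT s:{0..}|lebesgue. g s) = integral {0..} g"
    by (rule set_lebesgue_integral_eq_integral(2)[OF g_integrable])
  ultimately show ?thesis by simp
qed

lemma abs_integral_g_le: "\<bar>integral {0..x} g\<bar> \<le> integral {0..} (\<lambda>s. \<bar>g s\<bar>)"
proof -
  have abs_g: "(\<lambda>s. \<bar>g s\<bar>) integrable_on {0..}"
    using g_integrable unfolding absolutely_integrable_on_def by simp
  have "norm (integral {0..x} g) \<le> integral {0..x} (\<lambda>s. \<bar>g s\<bar>)"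
    by (intro integral_norm_bound_integral g_integrable_on integrable_on_subinterval[OF abs_g]) auto
  also have "\<dots> \<le> integral {0..} (\<lambda>s. \<bar>g s\<bar>)"
    by (intro integral_subset_le integrable_on_subinterval[OF abs_g] abs_g) auto
  finally show ?thesis by simp
qed

lemma Bfun_eq: "0 \<le> x \<Longrightarrow> Bfun \<beta> x = \<mu> * ln (1 + x) + integral {0..x} g"
proof -
  assume x: "0 \<le> x"
  have "((\<lambda>a. \<mu> / (1 + a)) has_integral \<mu> * ln (1 + x) - \<mu> * ln (1 + 0)) {0..x}"
    using x by (intro fundamental_theorem_of_calculus)
      (auto intro!: derivative_eq_intros simp: has_real_derivative_iff_has_vector_derivative[symmetric] divide_simps)
  then have "((\<lambda>a. \<mu> / (1 + a) + g a) has_integral \<mu> * ln (1 + x) + integral {0..x} g) {0..x}"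
    by (intro has_integral_add integrable_integral g_integrable_on) simp
  moreover have "Bfun \<beta> x = integral {0..x} (\<lambda>a. \<mu> / (1 + a) + g a)"
    unfolding Bfun_def using beta_decomp by (intro integral_cong) auto
  ultimately show ?thesis by (simp add: integral_unique)
qed

text \<open>Since \<open>B(a) = \<mu> ln a + O(1)\<close>, the profile decays like \<open>exp (- \<mu> s)\<close>; the factor
  \<open>exp (\<mu> s)\<close> removes this decay and cancels between profile and mass.\<close>
lemma scaled_profile_eq:
  assumes b: "b \<in> {0<..<1}"
  shows "exp (\<mu> * s) * profile s b = exp (- \<mu> * ln (exp (- s) + b) - integral {0..exp s * b} g) * weight b"
proof -
  have "ln (1 + exp s * b) = s + ln (exp (- s) + b)"
  proof -
    have "1 + exp s * b = exp s * (exp (- s) + b)" by (simp add: algebra_simps exp_minus)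
    moreover have "exp (- s) + b > 0" using b by (auto intro: add_pos_pos)
    ultimately show ?thesis using b by (simp add: ln_mult)
  qed
  then have "\<mu> * s - Bfun \<beta> (exp s * b) = - \<mu> * ln (exp (- s) + b) - integral {0..exp s * b} g"
    using b by (simp add: Bfun_eq algebra_simps)
  then show ?thesis
    unfolding profile_def mult.assoc[symmetric] exp_add[symmetric] by simp
qed

lemma stationary_weight_has_integral:
  "((\<lambda>b. b powr (- \<mu>) * weight b) has_integral Beta (1 - \<mu>) \<mu>) {0..1}"
  using has_integral_Beta_real[of "1 - \<mu>" \<mu>] mu_pos mu_less_1 by (simp add: weight_def)

lemma tendsto_scaled_profile:
  assumes b: "b \<in> {0<..<1}"
  shows "((\<lambda>s. exp (\<mu> * s) * profile s b) \<longlongrightarrow> exp (- integral {0..} g) * (b powr (- \<mu>) * weight b)) at_top"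
proof -
  have "((\<lambda>s::real. exp (- s)) \<longlongrightarrow> 0) at_top"
    using filterlim_compose[OF exp_at_bot filterlim_uminus_at_bot_at_top] by (simp add: o_def)
  then have ln_lim: "((\<lambda>s. ln (exp (- s) + b)) \<longlongrightarrow> ln (0 + b)) at_top"
    using b by (intro tendsto_intros) auto
  have "filterlim (\<lambda>s. exp s * b) at_top at_top"
    using b by (intro filterlim_at_top_mult_tendsto_pos[OF tendsto_const] exp_at_top) auto
  then have "((\<lambda>s. integral {0..exp s * b} g) \<longlongrightarrow> integral {0..} g) at_top"
    by (rule filterlim_compose[OF tendsto_integral_g])
  then have "((\<lambda>s. exp (- \<mu> * ln (exp (- s) + b) - integral {0..exp s * b} g) * weight b)
      \<longlongrightarrow> exp (- \<mu> * ln (0 + b) - integral {0..} g) * weight b) at_top"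
    by (intro tendsto_intros ln_lim)
  moreover have "exp (- \<mu> * ln (0 + b) - integral {0..} g) = exp (- integral {0..} g) * b powr (- \<mu>)"
    using b by (simp add: powr_def exp_diff exp_minus field_simps)
  ultimately show ?thesis by (simp add: scaled_profile_eq[OF b] mult.assoc)
qed

lemma tendsto_scaled_mass:
  "((\<lambda>s. exp (\<mu> * s) * mass s) \<longlongrightarrow> exp (- integral {0..} g) * Beta (1 - \<mu>) \<mu>) at_top"
proof (rule tendsto_at_topI_sequentially)
  fix X :: "nat \<Rightarrow> real" assume X: "filterlim X at_top sequentially"
  define N where "N = integral {0..} (\<lambda>s. \<bar>g s\<bar>)"
  have "(\<lambda>n. integral {0..1} (\<lambda>b. exp (\<mu> * X n) * profile (X n) b))
      \<longlonglongrightarrow> integral {0..1} (\<lambda>b. exp (- integral {0..} g) * (b powr (- \<mu>) * weight b))"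
  proof (rule dominated_convergence_countable_exception[where E="{}" and h="\<lambda>b. exp N * (b powr (- \<mu>) * weight b)"])
    show "(\<lambda>b. exp (\<mu> * X n) * profile (X n) b) integrable_on {0..1}" for n
      using integrable_on_cmult_left[OF profile_integrable] by simp
    show "(\<lambda>b. exp N * (b powr (- \<mu>) * weight b)) integrable_on {0..1}"
      using integrable_on_cmult_left[OF has_integral_integrable[OF stationary_weight_has_integral]]
      by simp
    fix n and b :: real assume "b \<in> {0<..<1} - {}"
    then have b: "b \<in> {0<..<1}" by simp
    have "ln b \<le> ln (exp (- X n) + b)" using b by (subst ln_le_cancel_iff) (auto intro: add_pos_pos)
    then have "\<mu> * ln b \<le> \<mu> * ln (exp (- X n) + b)" using mu_pos by (intro mult_left_mono) auto
    then have "- \<mu> * ln (exp (- X n) + b) - integral {0..exp (X n) * b} g \<le> - \<mu> * ln b + N"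
      using abs_integral_g_le[of "exp (X n) * b"] unfolding N_def by linarith
    then have "exp (\<mu> * X n) * profile (X n) b \<le> exp (- \<mu> * ln b + N) * weight b"
      unfolding scaled_profile_eq[OF b] by (intro mult_right_mono weight_nonneg) simp
    also have "\<dots> = exp N * (b powr (- \<mu>) * weight b)"
      using b by (simp add: powr_def mult_ac flip: exp_add)
    finally show "\<bar>exp (\<mu> * X n) * profile (X n) b\<bar> \<le> exp N * (b powr (- \<mu>) * weight b)"
      using profile_bounds[of b "X n"] b by simp
    show "(\<lambda>n. exp (\<mu> * X n) * profile (X n) b) \<longlonglongrightarrow> exp (- integral {0..} g) * (b powr (- \<mu>) * weight b)"
      by (rule filterlim_compose[OF tendsto_scaled_profile[OF b] X])
  qed simp
  moreover have "integral {0..1} (\<lambda>b. exp (\<mu> * X n) * profile (X n) b) = exp (\<mu> * X n) * mass (X n)" for n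
    by (simp add: mass_def)
  moreover have "integral {0..1} (\<lambda>b. exp (- integral {0..} g) * (b powr (- \<mu>) * weight b))
      = exp (- integral {0..} g) * Beta (1 - \<mu>) \<mu>"
    by (intro integral_unique has_integral_mult_right stationary_weight_has_integral)
  ultimately show "(\<lambda>n. exp (\<mu> * X n) * mass (X n)) \<longlonglongrightarrow> exp (- integral {0..} g) * Beta (1 - \<mu>) \<mu>"
    by simp
qed

lemma tendsto_normalized_profile:
  assumes b: "b \<in> {0<..<1}"
  shows "(normalized_profile b \<longlongrightarrow> Winf \<mu> b) at_top"
proof -
  have "((\<lambda>s. (exp (\<mu> * s) * profile s b) / (exp (\<mu> * s) * mass s)) \<longlongrightarrow>
      (exp (- integral {0..} g) * (b powr (- \<mu>) * weight b)) / (exp (- integral {0..} g) * Beta (1 - \<mu>) \<mu>)) at_top"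
    using Beta_real_pos[of "1 - \<mu>" \<mu>] mu_pos mu_less_1
    by (intro tendsto_divide tendsto_scaled_profile[OF b] tendsto_scaled_mass) auto
  moreover have "(exp (\<mu> * s) * profile s b) / (exp (\<mu> * s) * mass s) = normalized_profile b s" for s
    by (simp add: normalized_profile_def)
  moreover have "integral {0..1} (\<lambda>b. b powr (- \<mu>) * (1 - b) powr (\<mu> - 1)) = Beta (1 - \<mu>) \<mu>"
    using integral_unique[OF stationary_weight_has_integral] by (simp add: weight_def)
  then have "(exp (- integral {0..} g) * (b powr (- \<mu>) * weight b))
      / (exp (- integral {0..} g) * Beta (1 - \<mu>) \<mu>) = Winf \<mu> b"
    by (simp add: Winf_def weight_def)
  ultimately show ?thesis by simp
qed

lemma normalized_profile_diff_Winf_le: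
  assumes b: "b \<in> {0<..<1}"
  shows "ennreal \<bar>normalized_profile b \<tau> - Winf \<mu> b\<bar> \<le> (\<integral>\<^sup>+ t\<in>{\<tau>..}. ennreal (deviation b t) \<partial>lborel)"
proof -
  have b01: "b \<in> {0..1}" using b by auto
  have "ennreal \<bar>normalized_profile b s - normalized_profile b \<tau>\<bar>
      \<le> (\<integral>\<^sup>+ t\<in>{\<tau>..}. ennreal (deviation b t) \<partial>lborel)" if "\<tau> \<le> s" for s
  proof -
    have "ennreal \<bar>normalized_profile b s - normalized_profile b \<tau>\<bar> \<le> ennreal (integral {\<tau>..s} (deviation b))"
      by (intro ennreal_leI normalized_profile_variation_le[OF b that])
    also have "\<dots> = (\<integral>\<^sup>+ t\<in>{\<tau>..s}. ennreal (deviation b t) \<partial>lborel)"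
      by (intro nn_integral_has_integral_lebesgue'[symmetric] deviation_nonneg[OF b01]
          integrable_integral deviation_integrable[OF b01])
    also have "\<dots> \<le> (\<integral>\<^sup>+ t\<in>{\<tau>..}. ennreal (deviation b t) \<partial>lborel)"
      by (intro nn_integral_mono) (auto simp: indicator_def)
    finally show ?thesis .
  qed
  then have "\<forall>\<^sub>F s in at_top. ennreal \<bar>normalized_profile b s - normalized_profile b \<tau>\<bar>
      \<le> (\<integral>\<^sup>+ t\<in>{\<tau>..}. ennreal (deviation b t) \<partial>lborel)"
    by (auto intro: eventually_mono[OF eventually_ge_at_top[of \<tau>]])
  moreover have "((\<lambda>s. ennreal \<bar>normalized_profile b s - normalized_profile b \<tau>\<bar>)
      \<longlongrightarrow> ennreal \<bar>Winf \<mu> b - normalized_profile b \<tau>\<bar>) at_top"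
    by (intro tendsto_ennrealI tendsto_intros tendsto_normalized_profile[OF b])
  ultimately have "ennreal \<bar>Winf \<mu> b - normalized_profile b \<tau>\<bar>
      \<le> (\<integral>\<^sup>+ t\<in>{\<tau>..}. ennreal (deviation b t) \<partial>lborel)"
    by (intro tendsto_upperbound) auto
  then show ?thesis by (simp add: abs_minus_commute)
qed

lemma nn_integral_abs_diff_Winf_le:
  "(\<integral>\<^sup>+ b\<in>{0..1}. ennreal \<bar>normalized_profile b \<tau> - Winf \<mu> b\<bar> \<partial>lborel)
     \<le> 2 * (\<integral>\<^sup>+ t\<in>{\<tau>..}. (\<integral>\<^sup>+ b\<in>{0..1}.
            ennreal (\<bar>rate t b - \<mu>\<bar> * normalized_profile b t) \<partial>lborel) \<partial>lborel)"
proof -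
  have "(\<integral>\<^sup>+ b\<in>{0..1}. ennreal \<bar>normalized_profile b \<tau> - Winf \<mu> b\<bar> \<partial>lborel)
      \<le> (\<integral>\<^sup>+ b\<in>{0..1}. (\<integral>\<^sup>+ t\<in>{\<tau>..}. ennreal (deviation b t) \<partial>lborel) \<partial>lborel)"
  proof (rule nn_integral_mono_AE)
    have "AE b in lborel. b \<noteq> 0" "AE b in lborel. b \<noteq> 1" by (rule AE_lborel_singleton)+
    then show "AE b in lborel. ennreal \<bar>normalized_profile b \<tau> - Winf \<mu> b\<bar> * indicator {0..1} b
        \<le> (\<integral>\<^sup>+ t\<in>{\<tau>..}. ennreal (deviation b t) \<partial>lborel) * indicator {0..1} b"
    proof eventually_elim
      case (elim b)
      then show ?case using normalized_profile_diff_Winf_le[of b] by (cases "b \<in> {0..1}") auto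
    qed
  qed
  also have "\<dots> = (\<integral>\<^sup>+ t\<in>{\<tau>..}. (\<integral>\<^sup>+ b\<in>{0..1}. ennreal (deviation b t) \<partial>lborel) \<partial>lborel)"
    by (rule nn_integral_deviation_swap)
  also have "\<dots> \<le> (\<integral>\<^sup>+ t\<in>{\<tau>..}. 2 * (\<integral>\<^sup>+ b\<in>{0..1}.
      ennreal (\<bar>rate t b - \<mu>\<bar> * normalized_profile b t) \<partial>lborel) \<partial>lborel)"
    by (intro nn_integral_mono mult_right_mono nn_integral_deviation_le) simp
  also have "\<dots> = 2 * (\<integral>\<^sup>+ t\<in>{\<tau>..}. (\<integral>\<^sup>+ b\<in>{0..1}.
      ennreal (\<bar>rate t b - \<mu>\<bar> * normalized_profile b t) \<partial>lborel) \<partial>lborel)"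
  proof -
    have "(\<lambda>(t, b). ennreal (\<bar>rate t b - \<mu>\<bar> * normalized_profile b t) * indicator {0..1} b)
        \<in> borel_measurable (lborel \<Otimes>\<^sub>M lborel)"
      unfolding normalized_profile_def rate_def profile_def by measurable
    from lborel.borel_measurable_nn_integral[OF this] show ?thesis
      by (subst nn_integral_cmult[symmetric]) (auto simp: mult_ac)
  qed
  finally show ?thesis .
qed

end

theorem lemma10:
  fixes \<mu> K0 \<alpha> :: real and \<beta> g C :: "real \<Rightarrow> real" and \<tau> :: real
  assumes mu: "0 < \<mu>" "\<mu> < 1"
    and beta_pos: "\<forall>a\<ge>0. \<beta> a > 0"
    and beta_bdd: "bounded (\<beta> ` {0..})"
    and beta_mono: "\<forall>a b. 0 \<le> a \<longrightarrow> a \<le> b \<longrightarrow> \<beta> b \<le> \<beta> a"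
    and beta_lim: "((\<lambda>a. a * \<beta> a) \<longlongrightarrow> \<mu>) at_top"
    and beta_g: "\<forall>a\<ge>0. \<beta> a = \<mu> / (1 + a) + g a"
    and g_L1: "g absolutely_integrable_on {0..}"
    and K0: "K0 > 0" and alpha: "\<alpha> > 0"
    and g_tail: "\<forall>a\<ge>0. integral {a..} (\<lambda>s. \<bar>g s\<bar>) \<le> K0 * (1 + a) powr (-\<alpha>)"
    and C_pos: "\<forall>t\<ge>0. C t > 0"
    and C_norm: "\<forall>t\<ge>0. integral {0..1} (Wfun \<mu> \<beta> C t) = 1"
    and tau: "\<tau> \<ge> 0"
  shows "(\<integral>\<^sup>+ b\<in>{0..1}. ennreal \<bar>Wfun \<mu> \<beta> C \<tau> b - Winf \<mu> b\<bar> \<partial>lborel)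
      \<le> 2 * (\<integral>\<^sup>+ t\<in>{\<tau>..}. (\<integral>\<^sup>+ b\<in>{0..1}.
              ennreal (\<bar>exp t * b * \<beta> (exp t * b) - \<mu>\<bar> * Wfun \<mu> \<beta> C t b) \<partial>lborel) \<partial>lborel)"
proof -
  interpret rescaled_profile_convergent \<mu> \<beta> g
    by unfold_locales (use mu beta_pos beta_mono beta_g g_L1 in auto)
  have W: "Wfun \<mu> \<beta> C t b = normalized_profile b t" if "0 \<le> t" for t b
    using C_norm that by (intro Wfun_eq_normalized_profile) auto
  have "(\<integral>\<^sup>+ b\<in>{0..1}. ennreal \<bar>Wfun \<mu> \<beta> C \<tau> b - Winf \<mu> b\<bar> \<partial>lborel)
      = (\<integral>\<^sup>+ b\<in>{0..1}. ennreal \<bar>normalized_profile b \<tau> - Winf \<mu> b\<bar> \<partial>lborel)"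
    using W[OF tau] by simp
  also have "\<dots> \<le> 2 * (\<integral>\<^sup>+ t\<in>{\<tau>..}. (\<integral>\<^sup>+ b\<in>{0..1}.
      ennreal (\<bar>rate t b - \<mu>\<bar> * normalized_profile b t) \<partial>lborel) \<partial>lborel)"
    by (rule nn_integral_abs_diff_Winf_le)
  also have "\<dots> = 2 * (\<integral>\<^sup>+ t\<in>{\<tau>..}. (\<integral>\<^sup>+ b\<in>{0..1}.
      ennreal (\<bar>exp t * b * \<beta> (exp t * b) - \<mu>\<bar> * Wfun \<mu> \<beta> C t b) \<partial>lborel) \<partial>lborel)"
    using tau by (intro arg_cong[where f="(*) 2"] set_nn_integral_cong) (auto simp: rate_eq W)
  finally show ?thesis .
qed

end
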